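(* Let $N\ge 1$ be an integer and let $\lambda>0$, $\mu>0$, $\Delta\ge 0$ be real numbers. For each integer $c\in\{1,\dots,N\}$ put $$a(c)=\lambda\Big(\Delta+\frac{c}{N\mu}\Big),\qquad P_b(c)=\frac{a(c)^{c}/c!}{\sum_{j=0}^{c}a(c)^{j}/j!}.$$ Then $P_b(c)$ is decreasing in $c$ on $\{1,\dots,N\}$; in particular its minimum is attained at $c=N$ (i.e. replication factor $m=1$).
   Context: Model: an edge system has $N$ workers split into $c$ groups of $m=N/c$ workers each (the replication factor). Jobs arrive as a Poisson process of rate $\lambda$; each arriving job is replicated to all $m$ workers of a free group and a job finding all groups busy is blocked (sent to the cloud). Each worker's service time is shifted exponential $\mathrm{SExp}(\Delta,\mu)$, i.e. $\Delta+Y$ with $Y$ exponential of rate $\mu$; the job-computing time of a replicated job (minimum of $m$ i.i.d. copies) is $\mathrm{SExp}(\Delta,m\mu)$ with mean $\Delta+\frac{1}{m\mu}=\Delta+\frac{c}{N\mu}$. The system is modeled as an M/G/c/c loss queue, so the job-blocking probability is the Erlang B formula $P_b(c)$ above with offered load $a(c)=\lambda\,\mathbb{E}[T_{\text{job}}]$. *)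

theory Defs
  imports Complex_Main
begin

definition offered_load :: "nat \<Rightarrow> real \<Rightarrow> real \<Rightarrow> real \<Rightarrow> nat \<Rightarrow> real" where
  "offered_load N lam mu Delta c = lam * (Delta + real c / (real N * mu))"

definition erlang_B :: "nat \<Rightarrow> real \<Rightarrow> real" where
  "erlang_B c a = (a ^ c / fact c) / (\<Sum>j=0..c. a ^ j / fact j)"

definition blocking_prob :: "nat \<Rightarrow> real \<Rightarrow> real \<Rightarrow> real \<Rightarrow> nat \<Rightarrow> real" where
  "blocking_prob N lam mu Delta c = erlang_B c (offered_load N lam mu Delta c)"

end

theory Submission
  imports Defs
begin

text \<open>Dividing numerator and denominator of the Erlang B formula by \<open>a\<^sup>c/c!\<close> gives
  \<open>1 / E(c, a) = \<Sum>k\<le>c. \<Prod>i<k. (c - i)/a\<close>. For the load \<open>a(c) = \<alpha> + c\<beta>\<close> with \<open>\<alpha> \<ge> 0\<close>,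
  \<open>\<beta> > 0\<close>, each factor \<open>(c - i)/a(c)\<close> grows when \<open>c\<close> is replaced by \<open>c + 1\<close>, and the sum
  gains one more positive term; so \<open>1 / P\<^sub>b(c)\<close> is strictly increasing.\<close>

lemma fact_eq_fact_diff_mult_prod:
  "k \<le> n \<Longrightarrow> fact n = fact (n - k) * (\<Prod>i<k. of_nat n - of_nat i :: 'a::{semiring_char_0,comm_ring_1})"
proof (induction k)
  case 0
  then show ?case by simp
next
  case (Suc k)
  then have "n - k = Suc (n - Suc k)" by simp
  then have "(fact (n - k) :: 'a) = (of_nat n - of_nat k) * fact (n - Suc k)"
    using Suc.prems by (simp add: of_nat_diff)
  with Suc show ?case by (simp add: mult_ac)
qed

definition erlang_B_recip :: "nat \<Rightarrow> real \<Rightarrow> real" where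
  "erlang_B_recip c a = (\<Sum>k\<le>c. \<Prod>i<k. (real c - real i) / a)"

lemma erlang_B_recip_pos: "0 \<le> a \<Longrightarrow> 0 < erlang_B_recip c a"
  unfolding erlang_B_recip_def
  by (rule sum_pos2[where i = 0]) (auto intro!: prod_nonneg divide_nonneg_nonneg)

lemma erlang_B_eq_inverse_recip:
  assumes "0 < a"
  shows "erlang_B c a = 1 / erlang_B_recip c a"
proof -
  have "(\<Sum>j=0..c. a ^ j / fact j) = (\<Sum>k=0..c. a ^ (c - k) / fact (c - k))"
    by (subst sum.atLeastAtMost_rev) simp
  also have "\<dots> = (\<Sum>k\<le>c. a ^ c / fact c * (\<Prod>i<k. (real c - real i) / a))"
    unfolding atLeast0AtMost
  proof (rule sum.cong)
    fix k assume "k \<in> {..c}"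
    then have "k \<le> c" by simp
    then have "a ^ c = a ^ (c - k) * a ^ k" and
      "fact c = fact (c - k) * (\<Prod>i<k. real c - real i)"
      by (simp_all add: power_add[symmetric] fact_eq_fact_diff_mult_prod)
    then show "a ^ (c - k) / fact (c - k) = a ^ c / fact c * (\<Prod>i<k. (real c - real i) / a)"
      using assms \<open>k \<le> c\<close> by (simp add: prod_dividef field_simps)
  qed simp
  also have "\<dots> = a ^ c / fact c * erlang_B_recip c a"
    unfolding erlang_B_recip_def by (simp add: sum_distrib_left)
  finally show ?thesis
    unfolding erlang_B_def using assms by simp
qed

lemma linear_load_ratio_le:
  fixes \<alpha> \<beta> :: real
  assumes "0 \<le> \<alpha>" "0 < \<beta>" "i < c"
  shows "(real c - real i) / (\<alpha> + real c * \<beta>) \<le> (real (Suc c) - real i) / (\<alpha> + real (Suc c) * \<beta>)"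
proof -
  have "(real c - real i) * \<beta> \<le> \<alpha> + real c * \<beta>"
    using assms by (simp add: mult_right_mono add_increasing)
  then have "(real c - real i) * (\<alpha> + real (Suc c) * \<beta>) \<le> (real (Suc c) - real i) * (\<alpha> + real c * \<beta>)"
    by (simp add: algebra_simps)
  moreover have "0 < \<alpha> + real c * \<beta>" "0 < \<alpha> + real (Suc c) * \<beta>"
    using assms by (simp_all add: add_nonneg_pos)
  ultimately show ?thesis
    by (simp add: divide_simps del: of_nat_Suc)
qed

lemma erlang_B_recip_linear_load_less:
  fixes \<alpha> \<beta> :: real
  assumes "0 \<le> \<alpha>" "0 < \<beta>"
  shows "erlang_B_recip c (\<alpha> + real c * \<beta>) < erlang_B_recip (Suc c) (\<alpha> + real (Suc c) * \<beta>)"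
proof -
  define a where "a = \<alpha> + real c * \<beta>"
  define a' where "a' = \<alpha> + real (Suc c) * \<beta>"
  have "0 < a'"
    unfolding a'_def using assms by (simp add: add_nonneg_pos)
  have "(\<Prod>i<k. (real c - real i) / a) \<le> (\<Prod>i<k. (real (Suc c) - real i) / a')" if "k \<le> c" for k
  proof (rule prod_mono)
    fix i assume "i \<in> {..<k}"
    with that have "i < c" by simp
    then show "0 \<le> (real c - real i) / a \<and> (real c - real i) / a \<le> (real (Suc c) - real i) / a'"
      using assms linear_load_ratio_le[of \<alpha> \<beta> i c] unfolding a_def a'_def by simp
  qed
  then have "erlang_B_recip c a \<le> (\<Sum>k\<le>c. \<Prod>i<k. (real (Suc c) - real i) / a')"
    unfolding erlang_B_recip_def by (intro sum_mono) simp
  also have "\<dots> < erlang_B_recip (Suc c) a'"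
  proof -
    have "0 < (\<Prod>i<Suc c. (real (Suc c) - real i) / a')"
      using \<open>0 < a'\<close> by (intro prod_pos) simp
    then show ?thesis
      unfolding erlang_B_recip_def sum.atMost_Suc[of _ c] by linarith
  qed
  finally show ?thesis
    unfolding a_def a'_def .
qed

lemma erlang_B_linear_load_Suc_less:
  fixes \<alpha> \<beta> :: real
  assumes "0 \<le> \<alpha>" "0 < \<beta>" "0 < \<alpha> + real c * \<beta>"
  shows "erlang_B (Suc c) (\<alpha> + real (Suc c) * \<beta>) < erlang_B c (\<alpha> + real c * \<beta>)"
proof -
  have "0 < \<alpha> + real (Suc c) * \<beta>"
    using assms by (simp add: add_nonneg_pos)
  then show ?thesis
    using assms erlang_B_recip_pos erlang_B_recip_linear_load_less[OF assms(1,2), of c]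
    by (simp add: erlang_B_eq_inverse_recip divide_strict_left_mono)
qed

lemma offered_load_eq_linear:
  "offered_load N lam mu Delta c = lam * Delta + real c * (lam / (real N * mu))"
  unfolding offered_load_def by (simp add: algebra_simps)

theorem theorem1:
  fixes N :: nat and lam mu Delta :: real
  assumes "N \<ge> 1" and "lam > 0" and "mu > 0" and "Delta \<ge> 0"
  shows "(\<forall>c1\<in>{1..N}. \<forall>c2\<in>{1..N}. c1 < c2 \<longrightarrow>
            blocking_prob N lam mu Delta c2 < blocking_prob N lam mu Delta c1)
         \<and> (\<forall>c\<in>{1..N}. blocking_prob N lam mu Delta N \<le> blocking_prob N lam mu Delta c)"
proof -
  let ?P = "blocking_prob N lam mu Delta"
  define \<beta> where "\<beta> = lam / (real N * mu)"
  have "0 \<le> lam * Delta" "0 < \<beta>"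
    unfolding \<beta>_def using assms by simp_all
  then have step: "?P (Suc c) < ?P c" if "c \<in> {1..}" for c
    using that unfolding blocking_prob_def offered_load_eq_linear \<beta>_def[symmetric]
    by (intro erlang_B_linear_load_Suc_less) (auto intro: add_nonneg_pos)
  have "?P c2 < ?P c1" if "1 \<le> c1" "c1 < c2" for c1 c2
    using lift_Suc_mono_less_ivl[of "{1..}" "\<lambda>c. - ?P c", OF _ \<open>c1 < c2\<close>] step \<open>1 \<le> c1\<close>
    by fastforce
  then show ?thesis
    by (fastforce simp: order_le_less)
qed

end
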